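(* Let $n\ge1$, let $\lambda=(\lambda_1,\dots,\lambda_l)$ and $\mu=(\mu_1,\dots,\mu_m)$ be decompositions of $n+1$ with $1<\mu_m\le\lambda_l$, and let $\mu'=(\mu_1,\dots,\mu_{m-1},\mu_m-1,1)$. Let $G=\langle A_{2,n}(S_{\lambda|\mu})\rangle$ and let $H$ be the subgroup of $G$ generated by $S_{\lambda|\mu'}$ (note $S_{\lambda|\mu'}\subseteq S_{\lambda|\mu}$). Then the set of right cosets of $H$ in $G$ is $$\{H\}\cup\{H\,y_nx_n^{\varepsilon_n}y_{n-1}x_{n-1}^{\varepsilon_{n-1}}\cdots y_kx_k^{\varepsilon_k}\ :\ n-\mu_m+2\le k\le n,\ \varepsilon_j\in\{0,1\}\}.$$
   Context: A decomposition of $N$ is a finite sequence of positive integers with sum $N$. The stopover set of $\lambda=(\lambda_1,\dots,\lambda_l)$ is $\overline{s}(\lambda)=\{\lambda_1,\lambda_1+\lambda_2,\dots,\lambda_1+\dots+\lambda_{l-1}\}$, and $S_{\lambda|\mu}=\{x_i : 1\le i\le n,\ i\notin\overline{s}(\lambda)\}\cup\{y_j: 1\le j\le n,\ j\notin\overline{s}(\mu)\}$. The group $\langle A_{2,n}\rangle$ has generators $X=\{x_1,\dots,x_n,y_1,\dots,y_n\}$ and relations: $z^2=e$ ($z\in X$); $(x_ix_{i+1})^4=(y_iy_{i+1})^4=e$ ($1\le i\le n-1$); $(x_iy_i)^3=e$ ($1\le i\le n$); $(zt)^2=e$ for every other pair of distinct $z,t\in X$; $(x_ix_{i+1}y_i)^3=(x_ix_{i+1}y_{i+1})^3=(x_iy_iy_{i+1})^3=(x_{i+1}y_iy_{i+1})^3=e$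 ($1\le i\le n-1$); $(x_ix_{i+1}x_{i+2})^4=(y_iy_{i+1}y_{i+2})^4=e$ ($1\le i\le n-2$). For $S\subseteq X$, $\langle A_{2,n}(S)\rangle$ is the group generated by $S$ subject to exactly those relations above involving only elements of $S$. *)

theory Defs
  imports "HOL-Algebra.Algebra"
begin

datatype gen = Xg nat | Yg nat

definition gens :: "nat \<Rightarrow> gen set" where
  "gens n = {Xg i | i. 1 \<le> i \<and> i \<le> n} \<union> {Yg j | j. 1 \<le> j \<and> j \<le> n}"

definition wpow :: "'a list \<Rightarrow> nat \<Rightarrow> 'a list" where
  "wpow w k = concat (replicate k w)"

text \<open>Pairs of generators with a relation other than commuting.\<close>
definition special_pair :: "gen \<Rightarrow> gen \<Rightarrow> bool" where
  "special_pair z t \<longleftrightarrow> (\<exists>i. {z, t} = {Xg i, Xg (Suc i)} \<or> {z, t} = {Yg i, Yg (Suc i)}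
                              \<or> {z, t} = {Xg i, Yg i})"

definition relators :: "nat \<Rightarrow> gen list set" where
  "relators n =
     {[z, z] | z. z \<in> gens n}
   \<union> {wpow [Xg i, Xg (i+1)] 4 | i. 1 \<le> i \<and> i + 1 \<le> n}
   \<union> {wpow [Yg i, Yg (i+1)] 4 | i. 1 \<le> i \<and> i + 1 \<le> n}
   \<union> {wpow [Xg i, Yg i] 3 | i. 1 \<le> i \<and> i \<le> n}
   \<union> {wpow [z, t] 2 | z t. z \<in> gens n \<and> t \<in> gens n \<and> z \<noteq> t \<and> \<not> special_pair z t}
   \<union> {wpow [Xg i, Xg (i+1), Yg i] 3 | i. 1 \<le> i \<and> i + 1 \<le> n}
   \<union> {wpow [Xg i, Xg (i+1), Yg (i+1)] 3 | i. 1 \<le> i \<and> i + 1 \<le> n}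
   \<union> {wpow [Xg i, Yg i, Yg (i+1)] 3 | i. 1 \<le> i \<and> i + 1 \<le> n}
   \<union> {wpow [Xg (i+1), Yg i, Yg (i+1)] 3 | i. 1 \<le> i \<and> i + 1 \<le> n}
   \<union> {wpow [Xg i, Xg (i+1), Xg (i+2)] 4 | i. 1 \<le> i \<and> i + 2 \<le> n}
   \<union> {wpow [Yg i, Yg (i+1), Yg (i+2)] 4 | i. 1 \<le> i \<and> i + 2 \<le> n}"

definition relators_on :: "nat \<Rightarrow> gen set \<Rightarrow> gen list set" where
  "relators_on n S = {r \<in> relators n. set r \<subseteq> S}"

text \<open>Group presented by generators S and relators R: words over S modulo the
  equivalence generated by inserting/deleting relators (since z^2 = e is among
  the relators for every generator, no formal inverses are needed).\<close>
definition rel_step :: "'a list set \<Rightarrow> ('a list \<times> 'a list) set" where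
  "rel_step R = {(u @ r @ v, u @ v) | u r v. r \<in> R}"

definition word_eq :: "'a list set \<Rightarrow> ('a list \<times> 'a list) set" where
  "word_eq R = (rel_step R \<union> (rel_step R)\<inverse>)\<^sup>*"

definition presented_group :: "'a set \<Rightarrow> 'a list set \<Rightarrow> 'a list set monoid" where
  "presented_group S R =
     \<lparr> carrier = lists S // word_eq R,
       monoid.mult = (\<lambda>A B. \<Union>a\<in>A. \<Union>b\<in>B. word_eq R `` {a @ b}),
       monoid.one = word_eq R `` {[]} \<rparr>"

definition word_elt :: "'a list set \<Rightarrow> 'a list \<Rightarrow> 'a list set" where
  "word_elt R w = word_eq R `` {w}"

definition A2 :: "nat \<Rightarrow> gen set \<Rightarrow> gen list set monoid" where
  "A2 n S = presented_group S (relators_on n S)"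

definition decomposition :: "nat list \<Rightarrow> nat \<Rightarrow> bool" where
  "decomposition lam N \<longleftrightarrow> (\<forall>a \<in> set lam. 0 < a) \<and> sum_list lam = N"

definition stopover :: "nat list \<Rightarrow> nat set" where
  "stopover lam = {sum_list (take i lam) | i. 1 \<le> i \<and> i \<le> length lam - 1}"

definition S_set :: "nat \<Rightarrow> nat list \<Rightarrow> nat list \<Rightarrow> gen set" where
  "S_set n lam mu = {Xg i | i. 1 \<le> i \<and> i \<le> n \<and> i \<notin> stopover lam}
                  \<union> {Yg j | j. 1 \<le> j \<and> j \<le> n \<and> j \<notin> stopover mu}"

definition coset_word :: "nat \<Rightarrow> nat \<Rightarrow> (nat \<Rightarrow> bool) \<Rightarrow> gen list" where
  "coset_word n k eps = concat (map (\<lambda>j. Yg j # (if eps j then [Xg j] else [])) (rev [k..<n+1]))"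

end

theory Submission
  imports Defs
begin

text \<open>
  The right cosets of \<open>H = \<langle>S - {y\<^sub>n}\<rangle>\<close> are enumerated in the manner of Todd and Coxeter.
  Put \<open>K = n + 2 - \<mu>\<^sub>m\<close>: every generator of index at least \<open>K\<close> lies in \<open>S\<close>, while
  \<open>y\<^sub>K\<^sub>-\<^sub>1\<close> does not. The candidate representatives are the words
  \<open>W = B\<^sub>n B\<^sub>n\<^sub>-\<^sub>1 \<cdots> B\<^sub>k\<close> with \<open>K \<le> k \<le> n + 1\<close>, each block \<open>B\<^sub>j\<close> being \<open>y\<^sub>j\<close> or \<open>y\<^sub>j x\<^sub>j\<close>.
  For every generator \<open>z\<close> one has \<open>H W z = H W'\<close> for another such word \<open>W'\<close>: letters whose
  index is far from the tail of \<open>W\<close> commute past it, an \<open>x\<close>-letter of index below \<open>k\<close> can be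
  carried to the left of \<open>W\<close> (into \<open>H\<close>), and the remaining cases reduce to a handful of identities
  among \<open>x\<^sub>j, y\<^sub>j, x\<^sub>j\<^sub>+\<^sub>1, y\<^sub>j\<^sub>+\<^sub>1\<close> that follow from the relators. Since every element of the
  group is a word in \<open>S\<close>, starting from the empty word this reaches every right coset.
\<close>

section \<open>Groups presented by involutions\<close>

locale involutive_presentation =
  fixes S :: "'a set" and R :: "'a list set"
  assumes relator_letters: "r \<in> R \<Longrightarrow> set r \<subseteq> S"
    and square_relator: "z \<in> S \<Longrightarrow> [z, z] \<in> R"
begin

definition word_equiv :: "'a list \<Rightarrow> 'a list \<Rightarrow> bool" (infix "=\<^sub>G" 50)
  where "u =\<^sub>G v \<longleftrightarrow> (u, v) \<in> word_eq R"

lemma weq_refl [simp]: "w =\<^sub>G w"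
  by (simp add: word_equiv_def word_eq_def)

lemma weq_trans [trans]: "u =\<^sub>G v \<Longrightarrow> v =\<^sub>G w \<Longrightarrow> u =\<^sub>G w"
  unfolding word_equiv_def word_eq_def by (rule rtrancl_trans)

lemma weq_sym: "u =\<^sub>G v \<Longrightarrow> v =\<^sub>G u"
  unfolding word_equiv_def word_eq_def by (metis converse_Un converse_converse rtrancl_converseI sup_commute)

lemma weq_append_context: "u =\<^sub>G v \<Longrightarrow> p @ u @ q =\<^sub>G p @ v @ q"
  unfolding word_equiv_def word_eq_def
proof (induction rule: rtrancl_induct)
  case (step v w)
  have "\<And>u' v'. (u', v') \<in> rel_step R \<Longrightarrow> (p @ u' @ q, p @ v' @ q) \<in> rel_step R"
    unfolding rel_step_def by clarsimp (metis append.assoc)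
  with step(2) have "(p @ v @ q, p @ w @ q) \<in> rel_step R \<union> (rel_step R)\<inverse>" by blast
  with step(3) show ?case by (rule rtrancl_into_rtrancl)
qed simp

lemma weq_append: "u =\<^sub>G u' \<Longrightarrow> v =\<^sub>G v' \<Longrightarrow> u @ v =\<^sub>G u' @ v'"
  using weq_append_context[of u u' "[]" v] weq_append_context[of v v' u' "[]"] weq_trans by auto

lemma weq_delete_relator: "r \<in> R \<Longrightarrow> u @ r @ v =\<^sub>G u @ v"
  unfolding word_equiv_def word_eq_def rel_step_def by blast

lemma weq_rev_append_cancel: "set w \<subseteq> S \<Longrightarrow> rev w @ w =\<^sub>G []"
proof (induction w)
  case (Cons z w)
  then have "rev (z # w) @ z # w =\<^sub>G rev w @ w"
    using weq_delete_relator[OF square_relator, of z "rev w" w] by simp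
  also have "\<dots> =\<^sub>G []" using Cons by simp
  finally show ?case .
qed simp

lemma weq_append_rev_cancel: "set w \<subseteq> S \<Longrightarrow> w @ rev w =\<^sub>G []"
  using weq_rev_append_cancel[of "rev w"] by simp

lemma weq_trivial_rotate: "p @ q =\<^sub>G [] \<Longrightarrow> set q \<subseteq> S \<Longrightarrow> q @ p =\<^sub>G []"
proof -
  assume pq: "p @ q =\<^sub>G []" and q: "set q \<subseteq> S"
  have "q @ p =\<^sub>G q @ p @ q @ rev q"
    using weq_append_context[OF weq_sym[OF weq_append_rev_cancel[OF q]], of "q @ p" "[]"]
    by simp
  also have "\<dots> =\<^sub>G q @ rev q" using weq_append_context[OF pq, of q "rev q"] by simp
  also have "\<dots> =\<^sub>G []" by (rule weq_append_rev_cancel[OF q])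
  finally show ?thesis .
qed

lemma weq_rotate_relator: "r \<in> R \<Longrightarrow> rotate k r =\<^sub>G []"
proof (induction k)
  case 0
  then show ?case using weq_delete_relator[of r "[]" "[]"] by simp
next
  case (Suc k)
  have "set (rotate k r) \<subseteq> S" using relator_letters[OF Suc.prems] by simp
  with Suc show ?case
    by (cases "rotate k r") (auto intro: weq_trivial_rotate[of "[_]"])
qed

lemma weq_trivial_rev: "w =\<^sub>G [] \<Longrightarrow> set w \<subseteq> S \<Longrightarrow> rev w =\<^sub>G []"
proof -
  assume w: "w =\<^sub>G []" and S: "set w \<subseteq> S"
  have "rev w =\<^sub>G rev w @ w" using weq_append_context[OF weq_sym[OF w], of "rev w" "[]"] by simp
  also have "\<dots> =\<^sub>G []" by (rule weq_rev_append_cancel[OF S])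
  finally show ?thesis .
qed

text \<open>The generators are involutions, so \<open>rev l'\<close> represents the inverse of \<open>l'\<close>.\<close>
lemma relator_rewrite:
  assumes r: "r \<in> R"
    and conj: "\<exists>k<length r. rotate k r = l @ rev l' \<or> rotate k (rev r) = l @ rev l'"
  shows "u @ l @ v =\<^sub>G u @ l' @ v"
proof -
  from conj obtain k where k: "rotate k r = l @ rev l' \<or> rotate k (rev r) = l @ rev l'" by blast
  have rS: "set r \<subseteq> S" by (rule relator_letters[OF r])
  have "rotate k (rev r) =\<^sub>G []"
    unfolding rotate_rev by (rule weq_trivial_rev[OF weq_rotate_relator[OF r]]) (use rS in simp)
  then have triv: "l @ rev l' =\<^sub>G []"
    using k weq_rotate_relator[OF r, of k] by auto
  have "set (l @ rev l') \<subseteq> S" using k rS by (metis set_rev set_rotate)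
  then have l'S: "set l' \<subseteq> S" by simp
  have "l =\<^sub>G l @ rev l' @ l'"
    using weq_append_context[OF weq_sym[OF weq_rev_append_cancel[OF l'S]], of l "[]"]
    by simp
  also have "\<dots> =\<^sub>G l'" using weq_append_context[OF triv, of "[]" l'] by simp
  finally show ?thesis by (rule weq_append_context)
qed

lemma word_elt_self [simp]: "w \<in> word_elt R w"
  by (simp add: word_elt_def word_eq_def)

lemma word_elt_eq_iff: "word_elt R u = word_elt R v \<longleftrightarrow> u =\<^sub>G v"
proof
  assume eq: "word_elt R u = word_elt R v"
  have "v \<in> word_elt R u" by (simp add: eq)
  then show "u =\<^sub>G v" by (simp add: word_elt_def word_equiv_def)
next
  assume uv: "u =\<^sub>G v"
  have "u =\<^sub>G x \<longleftrightarrow> v =\<^sub>G x" for x using weq_trans[OF uv] weq_trans[OF weq_sym[OF uv]] by blast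
  then show "word_elt R u = word_elt R v" by (auto simp: word_elt_def word_equiv_def)
qed

lemma carrier_presented_group: "carrier (presented_group S R) = {word_elt R w | w. set w \<subseteq> S}"
  unfolding presented_group_def quotient_def word_elt_def by (auto simp: lists_eq_set)

lemma one_presented_group: "\<one>\<^bsub>presented_group S R\<^esub> = word_elt R []"
  unfolding presented_group_def word_elt_def by simp

lemma mult_presented_group:
  "word_elt R u \<otimes>\<^bsub>presented_group S R\<^esub> word_elt R v = word_elt R (u @ v)"
proof -
  have eq: "word_eq R `` {u' @ v'} = word_elt R (u @ v)" if "u' \<in> word_elt R u" "v' \<in> word_elt R v" for u' v'
  proof -
    from that have "u =\<^sub>G u'" "v =\<^sub>G v'" by (auto simp: word_elt_def word_equiv_def)
    then have "u' @ v' =\<^sub>G u @ v" using weq_append weq_sym by blast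
    then show ?thesis using word_elt_eq_iff by (simp add: word_elt_def)
  qed
  have "word_elt R u \<noteq> {}" "word_elt R v \<noteq> {}" using word_elt_self by blast+
  then show ?thesis unfolding presented_group_def by (simp add: eq cong: SUP_cong_simp)
qed

lemma group_presented_group: "group (presented_group S R)"
proof (rule groupI)
  fix x y assume "x \<in> carrier (presented_group S R)" "y \<in> carrier (presented_group S R)"
  then obtain u v where "x = word_elt R u" "y = word_elt R v" "set u \<subseteq> S" "set v \<subseteq> S"
    by (auto simp: carrier_presented_group)
  then show "x \<otimes>\<^bsub>presented_group S R\<^esub> y \<in> carrier (presented_group S R)"
    by (auto simp: carrier_presented_group mult_presented_group intro!: exI[of _ "u @ v"])
next
  show "\<one>\<^bsub>presented_group S R\<^esub> \<in> carrier (presented_group S R)"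
    by (auto simp: one_presented_group carrier_presented_group)
next
  fix x y z
  assume "x \<in> carrier (presented_group S R)" "y \<in> carrier (presented_group S R)"
    "z \<in> carrier (presented_group S R)"
  then obtain u v w where "x = word_elt R u" "y = word_elt R v" "z = word_elt R w"
    by (auto simp: carrier_presented_group)
  then show "x \<otimes>\<^bsub>presented_group S R\<^esub> y \<otimes>\<^bsub>presented_group S R\<^esub> z =
      x \<otimes>\<^bsub>presented_group S R\<^esub> (y \<otimes>\<^bsub>presented_group S R\<^esub> z)"
    by (simp add: mult_presented_group)
next
  fix x assume "x \<in> carrier (presented_group S R)"
  then obtain w where "x = word_elt R w" by (auto simp: carrier_presented_group)
  then show "\<one>\<^bsub>presented_group S R\<^esub> \<otimes>\<^bsub>presented_group S R\<^esub> x = x"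
    by (simp add: mult_presented_group one_presented_group)
next
  fix x assume "x \<in> carrier (presented_group S R)"
  then obtain w where x: "x = word_elt R w" and w: "set w \<subseteq> S"
    by (auto simp: carrier_presented_group)
  have "word_elt R (rev w) \<otimes>\<^bsub>presented_group S R\<^esub> x = \<one>\<^bsub>presented_group S R\<^esub>"
    using weq_rev_append_cancel[OF w]
    by (simp add: x mult_presented_group one_presented_group word_elt_eq_iff)
  moreover have "word_elt R (rev w) \<in> carrier (presented_group S R)"
    using w by (auto simp: carrier_presented_group intro!: exI[of _ "rev w"])
  ultimately show "\<exists>y\<in>carrier (presented_group S R). y \<otimes>\<^bsub>presented_group S R\<^esub> x = \<one>\<^bsub>presented_group S R\<^esub>"
    by (rule bexI)
qed

lemma inv_letter:
  assumes "z \<in> S"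
  shows "inv\<^bsub>presented_group S R\<^esub> word_elt R [z] = word_elt R [z]"
proof -
  have "word_elt R [z] \<in> carrier (presented_group S R)"
    using assms by (auto simp: carrier_presented_group intro!: exI[of _ "[z]"])
  moreover have "word_elt R [z] \<otimes>\<^bsub>presented_group S R\<^esub> word_elt R [z] = \<one>\<^bsub>presented_group S R\<^esub>"
    using weq_delete_relator[OF square_relator[OF assms], of "[]" "[]"]
    by (simp add: mult_presented_group one_presented_group word_elt_eq_iff)
  ultimately show ?thesis by (intro group.inv_equality[OF group_presented_group])
qed

lemma generate_letters:
  assumes T: "T \<subseteq> S"
  shows "generate (presented_group S R) ((\<lambda>z. word_elt R [z]) ` T) = {word_elt R h | h. set h \<subseteq> T}"
proof
  show "generate (presented_group S R) ((\<lambda>z. word_elt R [z]) ` T) \<subseteq> {word_elt R h | h. set h \<subseteq> T}"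
  proof
    fix g assume "g \<in> generate (presented_group S R) ((\<lambda>z. word_elt R [z]) ` T)"
    then show "g \<in> {word_elt R h | h. set h \<subseteq> T}"
    proof (induction rule: generate.induct)
      case one
      then show ?case by (auto simp: one_presented_group intro!: exI[of _ "[]"])
    next
      case (incl g)
      then obtain z where "g = word_elt R [z]" "z \<in> T" by auto
      then show ?case by (auto intro!: exI[of _ "[z]"])
    next
      case (inv g)
      then show ?case using T inv_letter by fastforce
    next
      case (eng g g')
      then obtain h h' where "g = word_elt R h" "set h \<subseteq> T" "g' = word_elt R h'" "set h' \<subseteq> T"
        by auto
      then show ?case by (auto simp: mult_presented_group intro!: exI[of _ "h @ h'"])
    qed
  qed
next
  show "{word_elt R h | h. set h \<subseteq> T} \<subseteq> generate (presented_group S R) ((\<lambda>z. word_elt R [z]) ` T)"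
  proof clarify
    fix h assume "set h \<subseteq> T"
    then show "word_elt R h \<in> generate (presented_group S R) ((\<lambda>z. word_elt R [z]) ` T)"
    proof (induction h)
      case Nil
      then show ?case using generate.one by (metis one_presented_group)
    next
      case (Cons z h)
      then have "word_elt R [z] \<otimes>\<^bsub>presented_group S R\<^esub> word_elt R h
          \<in> generate (presented_group S R) ((\<lambda>z. word_elt R [z]) ` T)"
        by (auto intro: generate.eng generate.incl)
      then show ?case by (simp add: mult_presented_group)
    qed
  qed
qed

definition same_rcoset :: "'a set \<Rightarrow> 'a list \<Rightarrow> 'a list \<Rightarrow> bool" where
  "same_rcoset T w v \<longleftrightarrow> (\<exists>h. set h \<subseteq> T \<and> w =\<^sub>G h @ v)"

lemma same_rcosetI: "w =\<^sub>G h @ v \<Longrightarrow> set h \<subseteq> T \<Longrightarrow> same_rcoset T w v"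
  unfolding same_rcoset_def by blast

lemma weq_imp_same_rcoset: "w =\<^sub>G v \<Longrightarrow> same_rcoset T w v"
  by (rule same_rcosetI[of _ "[]"]) simp_all

lemma same_rcoset_trans [trans]:
  "same_rcoset T u v \<Longrightarrow> same_rcoset T v w \<Longrightarrow> same_rcoset T u w"
proof -
  assume "same_rcoset T u v" "same_rcoset T v w"
  then obtain h h' where "set h \<subseteq> T" "u =\<^sub>G h @ v" "set h' \<subseteq> T" "v =\<^sub>G h' @ w"
    by (auto simp: same_rcoset_def)
  then show ?thesis
    using weq_trans[of u "h @ v" "(h @ h') @ w"] weq_append[of h h v "h' @ w"]
    by (intro same_rcosetI[of _ "h @ h'"]) auto
qed

lemma same_rcoset_prefix: "set h \<subseteq> T \<Longrightarrow> same_rcoset T (h @ w) w"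
  by (rule same_rcosetI) simp_all

lemma weq_same_rcoset_trans [trans]: "u =\<^sub>G v \<Longrightarrow> same_rcoset T v w \<Longrightarrow> same_rcoset T u w"
  using same_rcoset_trans weq_imp_same_rcoset by blast

lemma same_rcoset_append: "same_rcoset T w v \<Longrightarrow> same_rcoset T (w @ g) (v @ g)"
  unfolding same_rcoset_def using weq_append[OF _ weq_refl, of w _ g] by fastforce

lemma rcoset_word_elt:
  assumes "T \<subseteq> S"
  shows "generate (presented_group S R) ((\<lambda>z. word_elt R [z]) ` T) #>\<^bsub>presented_group S R\<^esub> word_elt R w
    = {word_elt R (h @ w) | h. set h \<subseteq> T}"
  unfolding generate_letters[OF assms] r_coset_def by (fastforce simp: mult_presented_group)

lemma rcoset_eq_if_same_rcoset:
  assumes T: "T \<subseteq> S" and wv: "same_rcoset T w v"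
  shows "generate (presented_group S R) ((\<lambda>z. word_elt R [z]) ` T) #>\<^bsub>presented_group S R\<^esub> word_elt R w
    = generate (presented_group S R) ((\<lambda>z. word_elt R [z]) ` T) #>\<^bsub>presented_group S R\<^esub> word_elt R v"
proof -
  from wv obtain h where h: "set h \<subseteq> T" and w: "w =\<^sub>G h @ v" by (auto simp: same_rcoset_def)
  have v: "v =\<^sub>G rev h @ w"
  proof -
    have "set h \<subseteq> S" using h T by blast
    then have "v =\<^sub>G (rev h @ h) @ v"
      using weq_append[OF weq_sym[OF weq_rev_append_cancel] weq_refl[of v]] by simp
    also have "\<dots> =\<^sub>G rev h @ w" using weq_append[OF weq_refl weq_sym[OF w]] by simp
    finally show ?thesis .
  qed
  have "word_elt R (g @ v) \<in> {word_elt R (h' @ w) | h'. set h' \<subseteq> T}" if "set g \<subseteq> T" for g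
    using that h weq_append[OF weq_refl[of g] v] by (auto simp: word_elt_eq_iff intro!: exI[of _ "g @ rev h"])
  moreover have "word_elt R (g @ w) \<in> {word_elt R (h' @ v) | h'. set h' \<subseteq> T}" if "set g \<subseteq> T" for g
    using that h weq_append[OF weq_refl[of g] w] by (auto simp: word_elt_eq_iff intro!: exI[of _ "g @ h"])
  ultimately show ?thesis unfolding rcoset_word_elt[OF T] by blast
qed

lemma same_rcoset_absorb_word:
  assumes "\<forall>z\<in>set g. same_rcoset T (p @ [z]) p"
  shows "same_rcoset T (p @ g) p"
  using assms
proof (induction g rule: rev_induct)
  case (snoc z g)
  then have "same_rcoset T (p @ g @ [z]) (p @ [z])" using same_rcoset_append[of T "p @ g" p "[z]"] by simp
  also have "same_rcoset T (p @ [z]) p" using snoc.prems by simp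
  finally show ?case by simp
qed (simp add: weq_imp_same_rcoset)

definition commuting :: "'a \<Rightarrow> 'a \<Rightarrow> bool" where
  "commuting z t \<longleftrightarrow> z = t \<or> [z, t, z, t] \<in> R"

lemma weq_commuting_swap: "commuting z t \<Longrightarrow> p @ [z, t] @ q =\<^sub>G p @ [t, z] @ q"
  unfolding commuting_def
  using relator_rewrite[of "[z, t, z, t]" "[z, t]" "[t, z]" p q] by (auto simp: Ex_less_Suc)

lemma weq_commuting_letter:
  assumes "\<forall>t\<in>set p. commuting z t"
  shows "[z] @ p =\<^sub>G p @ [z]"
  using assms
proof (induction p)
  case (Cons t p)
  then have "[z] @ t # p =\<^sub>G t # [z] @ p" using weq_commuting_swap[of z t "[]" p] by simp
  also have "\<dots> =\<^sub>G t # p @ [z]" using weq_append_context[OF Cons.IH, of "[t]" "[]"] Cons.prems by simp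
  finally show ?case by simp
qed simp

lemma weq_commuting_words:
  assumes "\<forall>z\<in>set g. \<forall>t\<in>set p. commuting z t"
  shows "g @ p =\<^sub>G p @ g"
  using assms
proof (induction g)
  case (Cons z g)
  have "z # g @ p =\<^sub>G z # p @ g" using weq_append_context[OF Cons.IH, of "[z]" "[]"] Cons.prems by simp
  also have "\<dots> =\<^sub>G p @ z # g"
    using weq_append[OF weq_commuting_letter[of p z] weq_refl[of g]] Cons.prems by simp
  finally show ?case by simp
qed simp

end

section \<open>Relations among adjacent generators\<close>

lemma (in involutive_presentation) y'x'x_rewrite:
  assumes xx'y': "[x, x', y', x, x', y', x, x', y'] \<in> R"
    and xy': "[x, y', x, y'] \<in> R" and x'y': "[x', y', x', y', x', y'] \<in> R"
  shows "[y', x', x] =\<^sub>G [x, x', x, x', y', x']"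
proof -
  have "[y', x', x] =\<^sub>G [x, x', y', x, x', y']"
    using relator_rewrite[OF xx'y', of "[y', x', x]" "[x, x', y', x, x', y']" "[]" "[]"]
    by (simp add: Ex_less_Suc rotate1_def)
  also have "\<dots> =\<^sub>G [x, x', x, y', x', y']"
    using relator_rewrite[OF xy', of "[y', x]" "[x, y']" "[x, x']" "[x', y']"]
    by (simp add: Ex_less_Suc rotate1_def)
  also have "\<dots> =\<^sub>G [x, x', x, x', y', x']"
    using relator_rewrite[OF x'y', of "[y', x', y']" "[x', y', x']" "[x, x', x]" "[]"]
    by (simp add: Ex_less_Suc rotate1_def)
  finally show ?thesis .
qed

text \<open>The letters \<open>x, y, x', y'\<close> play the roles of \<open>x\<^sub>j, y\<^sub>j, x\<^sub>j\<^sub>+\<^sub>1, y\<^sub>j\<^sub>+\<^sub>1\<close>.\<close>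
locale adjacent_letters = involutive_presentation +
  fixes x y x' y' :: 'a
  assumes xy: "[x, y, x, y, x, y] \<in> R" and x'y': "[x', y', x', y', x', y'] \<in> R"
    and xy': "[x, y', x, y'] \<in> R" and yx': "[y, x', y, x'] \<in> R"
    and xx'y: "[x, x', y, x, x', y, x, x', y] \<in> R" and xx'y': "[x, x', y', x, x', y', x, x', y'] \<in> R"
    and xyy': "[x, y, y', x, y, y', x, y, y'] \<in> R" and x'yy': "[x', y, y', x', y, y', x', y, y'] \<in> R"
begin

lemma y'yxx'_rewrite: "[y', y, x, x'] =\<^sub>G [x', x, x', y', y, x]"
proof -
  have "[y', y, x, x'] =\<^sub>G [x', y', x', y', x', y, x, x']"
    using relator_rewrite[OF x'y', of "[y']" "[x', y', x', y', x']" "[]" "[y, x, x']"]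
    by (simp add: Ex_less_Suc rotate1_def)
  also have "\<dots> =\<^sub>G [x', y', x', x, y', x, x', y, x, x']"
    using relator_rewrite[OF xy', of "[y']" "[x, y', x]" "[x', y', x']" "[x', y, x, x']"]
    by (simp add: Ex_less_Suc rotate1_def)
  also have "\<dots> =\<^sub>G [x', x, x', y', x, x', x, x', y, x, x']"
    using relator_rewrite[OF xx'y', of "[y', x', x, y']" "[x, x', y', x, x']" "[x']" "[x, x', y, x, x']"]
    by (simp add: Ex_less_Suc rotate1_def)
  also have "\<dots> =\<^sub>G [x', x, x', y', x, x', y, x', x, y]"
    using relator_rewrite[OF xx'y, of "[x, x', y, x, x']" "[y, x', x, y]" "[x', x, x', y', x, x']" "[]"]
    by (simp add: Ex_less_Suc rotate1_def)
  also have "\<dots> =\<^sub>G [x', x, x', y', x, y, x, y]"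
    using relator_rewrite[OF yx', of "[x', y, x']" "[y]" "[x', x, x', y', x]" "[x, y]"]
    by (simp add: Ex_less_Suc rotate1_def)
  also have "\<dots> =\<^sub>G [x', x, x', y', y, x]"
    using relator_rewrite[OF xy, of "[x, y, x, y]" "[y, x]" "[x', x, x', y']" "[]"]
    by (simp add: Ex_less_Suc rotate1_def)
  finally show ?thesis .
qed

lemma y'x'yxx'_rewrite: "[y', x', y, x, x'] =\<^sub>G [x', x, x', y', x', y, x]"
proof -
  have "[y', x', y, x, x'] =\<^sub>G [y', x', y, x, y, x, x', y, x, x', y, x]"
    using relator_rewrite[OF xx'y, of "[x']" "[y, x, x', y, x, x', y, x]" "[y', x', y, x]" "[]"]
    by (simp add: Ex_less_Suc rotate1_def)
  also have "\<dots> =\<^sub>G [y', x', x, y, x', y, x, x', y, x]"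
    using relator_rewrite[OF xy, of "[y, x, y, x]" "[x, y]" "[y', x']" "[x', y, x, x', y, x]"]
    by (simp add: Ex_less_Suc rotate1_def)
  also have "\<dots> =\<^sub>G [y', x', y', x, y', y, x', y, x, x', y, x]"
    using relator_rewrite[OF xy', of "[x]" "[y', x, y']" "[y', x']" "[y, x', y, x, x', y, x]"]
    by (simp add: Ex_less_Suc rotate1_def)
  also have "\<dots> =\<^sub>G [x', y', x', x, y', y, x', y, x, x', y, x]"
    using relator_rewrite[OF x'y', of "[y', x', y']" "[x', y', x']" "[]" "[x, y', y, x', y, x, x', y, x]"]
    by (simp add: Ex_less_Suc rotate1_def)
  also have "\<dots> =\<^sub>G [x', y', x', x, y', x', x, x', y, x]"
    using relator_rewrite[OF yx', of "[y, x', y]" "[x']" "[x', y', x', x, y']" "[x, x', y, x]"]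
    by (simp add: Ex_less_Suc rotate1_def)
  also have "\<dots> =\<^sub>G [x', x, x', y', x', y, x]"
    using relator_rewrite[OF xx'y', of "[y', x', x, y', x', x]" "[x, x', y']" "[x']" "[x', y, x]"]
    by (simp add: Ex_less_Suc rotate1_def)
  finally show ?thesis .
qed

lemma y'yy'_rewrite: "[y', y, y'] =\<^sub>G [x, y, x, y', y, x]"
proof -
  have "[y', y, y'] =\<^sub>G [y', x, y', y, x, y', y, x]"
    using relator_rewrite[OF xyy', of "[y, y']" "[x, y', y, x, y', y, x]" "[y']" "[]"]
    by (simp add: Ex_less_Suc rotate1_def)
  also have "\<dots> =\<^sub>G [x, y, x, y', y, x]"
    using relator_rewrite[OF xy', of "[y', x, y']" "[x]" "[]" "[y, x, y', y, x]"]
    by (simp add: Ex_less_Suc rotate1_def)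
  finally show ?thesis .
qed

lemma y'yxy'_rewrite: "[y', y, x, y'] =\<^sub>G [x, y, x, y', y]"
proof -
  have "[y', y, x, y'] =\<^sub>G [x, y, y', x, y]"
    using relator_rewrite[OF xyy', of "[y', y, x, y']" "[x, y, y', x, y]" "[]" "[]"]
    by (simp add: Ex_less_Suc rotate1_def)
  also have "\<dots> =\<^sub>G [x, y, x, y', y]"
    using relator_rewrite[OF xy', of "[y', x]" "[x, y']" "[x, y]" "[y]"]
    by (simp add: Ex_less_Suc rotate1_def)
  finally show ?thesis .
qed

lemma y'x'yy'_rewrite: "[y', x', y, y'] =\<^sub>G [y, x', y', x', y]"
proof -
  have "[y', x', y, y'] =\<^sub>G [y, x', y', y, x']"
    using relator_rewrite[OF x'yy', of "[y', x', y, y']" "[y, x', y', y, x']" "[]" "[]"]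
    by (simp add: Ex_less_Suc rotate1_def)
  also have "\<dots> =\<^sub>G [y, x', y', x', y]"
    using relator_rewrite[OF yx', of "[y, x']" "[x', y]" "[y, x', y']" "[]"]
    by (simp add: Ex_less_Suc rotate1_def)
  finally show ?thesis .
qed

lemma y'x'yxy'_rewrite: "[y', x', y, x, y'] =\<^sub>G [y, x', y', x', y, x]"
proof -
  have "[y', x', y, x, y'] =\<^sub>G [y, x', y', y, x', y', x, y']"
    using relator_rewrite[OF x'yy', of "[y', x', y]" "[y, x', y', y, x', y']" "[]" "[x, y']"]
    by (simp add: Ex_less_Suc rotate1_def)
  also have "\<dots> =\<^sub>G [y, x', y', y, x', x]"
    using relator_rewrite[OF xy', of "[y', x, y']" "[x]" "[y, x', y', y, x']" "[]"]
    by (simp add: Ex_less_Suc rotate1_def)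
  also have "\<dots> =\<^sub>G [y, x', y', x', y, x]"
    using relator_rewrite[OF yx', of "[y, x']" "[x', y]" "[y, x', y']" "[x]"]
    by (simp add: Ex_less_Suc rotate1_def)
  finally show ?thesis .
qed

end

section \<open>The presentation of \<open>A\<^sub>2\<^sub>,\<^sub>n(S)\<close>\<close>

locale A2_presentation =
  fixes n :: nat and S :: "gen set"
  assumes letters_in_gens: "S \<subseteq> gens n"

sublocale A2_presentation \<subseteq> involutive_presentation S "relators_on n S"
proof
  show "set r \<subseteq> S" if "r \<in> relators_on n S" for r using that by (simp add: relators_on_def)
  show "[z, z] \<in> relators_on n S" if "z \<in> S" for z
    using that letters_in_gens by (auto simp: relators_on_def relators_def)
qed

fun gen_index :: "gen \<Rightarrow> nat" where
  "gen_index (Xg i) = i"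
| "gen_index (Yg i) = i"

lemma special_pair_index: "special_pair z t \<Longrightarrow> gen_index z \<le> Suc (gen_index t) \<and> gen_index t \<le> Suc (gen_index z)"
  by (auto simp: special_pair_def doubleton_eq_iff)

lemma special_pair_Xg_Yg: "special_pair (Xg i) (Yg j) \<longleftrightarrow> i = j" "special_pair (Yg j) (Xg i) \<longleftrightarrow> i = j"
  by (auto simp: special_pair_def doubleton_eq_iff)

context A2_presentation
begin

notation word_equiv (infix "=\<^sub>G" 50)

lemma relators_onI: "r \<in> relators n \<Longrightarrow> set r \<subseteq> S \<Longrightarrow> r \<in> relators_on n S"
  by (simp add: relators_on_def)

lemma index_bounds: "z \<in> S \<Longrightarrow> 1 \<le> gen_index z \<and> gen_index z \<le> n"
  using letters_in_gens by (cases z) (auto simp: gens_def)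

lemma commuting_if_not_special: "z \<in> S \<Longrightarrow> t \<in> S \<Longrightarrow> \<not> special_pair z t \<Longrightarrow> commuting z t"
proof -
  assume z: "z \<in> S" and t: "t \<in> S" and "\<not> special_pair z t"
  then have "z \<noteq> t \<Longrightarrow> wpow [z, t] 2 \<in> relators n"
    using letters_in_gens unfolding relators_def by blast
  then show ?thesis
    using z t by (auto simp: commuting_def wpow_def numeral_2_eq_2 intro: relators_onI)
qed

lemma commuting_far:
  "z \<in> S \<Longrightarrow> t \<in> S \<Longrightarrow> gen_index z + 2 \<le> gen_index t \<or> gen_index t + 2 \<le> gen_index z \<Longrightarrow> commuting z t"
  using special_pair_index by (intro commuting_if_not_special) fastforce+

lemma commuting_Xg_Yg:
  "Xg i \<in> S \<Longrightarrow> Yg j \<in> S \<Longrightarrow> i \<noteq> j \<Longrightarrow> commuting (Xg i) (Yg j) \<and> commuting (Yg j) (Xg i)"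
  by (simp add: commuting_if_not_special special_pair_Xg_Yg)

lemma y'x'x_rewrite_at:
  assumes "Xg j \<in> S" "Xg (Suc j) \<in> S" "Yg (Suc j) \<in> S"
  shows "[Yg (Suc j), Xg (Suc j), Xg j] =\<^sub>G [Xg j, Xg (Suc j), Xg j, Xg (Suc j), Yg (Suc j), Xg (Suc j)]"
proof -
  have j: "1 \<le> j" "j + 1 \<le> n" using index_bounds assms by fastforce+
  show ?thesis
    using assms j
    by (intro y'x'x_rewrite relators_onI)
      (auto simp: relators_def wpow_def numeral_eq_Suc special_pair_Xg_Yg gens_def)
qed

lemma yxy_rewrite_at:
  assumes "Xg j \<in> S" "Yg j \<in> S"
  shows "[Yg j, Xg j, Yg j] =\<^sub>G [Xg j, Yg j, Xg j]"
proof -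
  have "[Xg j, Yg j, Xg j, Yg j, Xg j, Yg j] \<in> relators_on n S"
    using assms index_bounds[of "Xg j"] by (auto intro!: relators_onI simp: relators_def wpow_def numeral_eq_Suc)
  from relator_rewrite[OF this, of "[Yg j, Xg j, Yg j]" "[Xg j, Yg j, Xg j]" "[]" "[]"] show ?thesis
    by (simp add: Ex_less_Suc rotate1_def)
qed

lemma adjacent_letters_at:
  assumes "Xg j \<in> S" "Yg j \<in> S" "Xg (Suc j) \<in> S" "Yg (Suc j) \<in> S"
  shows "adjacent_letters S (relators_on n S) (Xg j) (Yg j) (Xg (Suc j)) (Yg (Suc j))"
proof -
  have j: "1 \<le> j" "j + 1 \<le> n" using index_bounds assms by fastforce+
  show ?thesis
    using assms j
    by unfold_locales
      (auto intro!: relators_onI simp: relators_def wpow_def numeral_eq_Suc special_pair_Xg_Yg gens_def)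
qed

end

section \<open>Coset enumeration\<close>

definition block :: "(nat \<Rightarrow> bool) \<Rightarrow> nat \<Rightarrow> gen list" where
  "block e j = Yg j # (if e j then [Xg j] else [])"

definition blocks :: "(nat \<Rightarrow> bool) \<Rightarrow> nat \<Rightarrow> nat \<Rightarrow> gen list" where
  "blocks e a b = concat (map (block e) (rev [a..<b]))"

lemma blocks_split: "a \<le> b \<Longrightarrow> b \<le> c \<Longrightarrow> blocks e a c = blocks e b c @ blocks e a b"
  unfolding blocks_def by (metis concat_append map_append rev_append upt_add_eq_append le_add_diff_inverse)

lemma blocks_empty [simp]: "blocks e a a = []"
  by (simp add: blocks_def)

lemma blocks_Suc: "a < b \<Longrightarrow> blocks e a b = blocks e (Suc a) b @ block e a"
  using blocks_split[of a "Suc a" b e] by (simp add: blocks_def)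

lemma blocks_update: "j < a \<or> b \<le> j \<Longrightarrow> blocks (e(j := v)) a b = blocks e a b"
  unfolding blocks_def block_def by (intro arg_cong[where f = concat] map_cong) auto

lemma gen_index_blocks: "t \<in> set (blocks e a b) \<Longrightarrow> a \<le> gen_index t \<and> gen_index t < b"
  unfolding blocks_def block_def by (auto split: if_splits)

lemma coset_word_eq_blocks: "coset_word n k eps = blocks eps k (Suc n)"
  unfolding coset_word_def blocks_def block_def by simp

locale A2_coset_enumeration = A2_presentation +
  fixes K :: nat
  assumes K_le: "K \<le> Suc n"
    and Xg_upper: "K \<le> i \<Longrightarrow> i \<le> n \<Longrightarrow> Xg i \<in> S"
    and Yg_upper: "K \<le> i \<Longrightarrow> i \<le> n \<Longrightarrow> Yg i \<in> S"
    and Yg_gap: "Yg (K - 1) \<notin> S"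
begin

abbreviation same_H_rcoset :: "gen list \<Rightarrow> gen list \<Rightarrow> bool" (infix "\<equiv>\<^sub>H" 50)
  where "w \<equiv>\<^sub>H v \<equiv> same_rcoset (S - {Yg n}) w v"

abbreviation coset_rep :: "(nat \<Rightarrow> bool) \<Rightarrow> nat \<Rightarrow> gen list"
  where "coset_rep e k \<equiv> blocks e k (Suc n)"

lemma blocks_letters: "K \<le> a \<Longrightarrow> b \<le> Suc n \<Longrightarrow> set (blocks e a b) \<subseteq> S"
  unfolding blocks_def block_def using Xg_upper Yg_upper by (auto split: if_splits)

lemma weq_blocks_commute:
  assumes "set g \<subseteq> S" "K \<le> a" "b \<le> Suc n"
    and "\<forall>z\<in>set g. gen_index z + 2 \<le> a \<or> b + 1 \<le> gen_index z"
  shows "blocks e a b @ g =\<^sub>G g @ blocks e a b"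
proof -
  have "\<forall>z\<in>set g. \<forall>t\<in>set (blocks e a b). commuting z t"
    using assms blocks_letters gen_index_blocks by (fastforce intro: commuting_far)
  then show ?thesis using weq_commuting_words weq_sym by blast
qed

lemma Xg_absorbed:
  "K \<le> k \<Longrightarrow> k \<le> Suc n \<Longrightarrow> Xg i \<in> S \<Longrightarrow> i < k \<Longrightarrow> coset_rep e k @ [Xg i] \<equiv>\<^sub>H coset_rep e k"
proof (induction "Suc n - k" arbitrary: k i)
  case 0
  then show ?case by (intro same_rcosetI[of _ "[Xg i]"]) auto
next
  case (Suc d)
  define P where "P = coset_rep e (Suc k)"
  have k: "k \<le> n" using Suc.hyps(2) by simp
  have rep: "coset_rep e k = P @ block e k" unfolding P_def using k blocks_Suc by simp
  have IH: "\<forall>z\<in>set g. P @ [z] \<equiv>\<^sub>H P" if "set g \<subseteq> {Xg m | m. Xg m \<in> S \<and> m < Suc k}" for g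
    using that Suc k unfolding P_def by (auto intro!: Suc.hyps(1))
  have "Xg k \<in> S" "Yg k \<in> S" using Xg_upper Yg_upper Suc.prems k by auto
  show ?case
  proof (cases "Suc i = k \<and> e k")
    case True
    have "P @ block e k @ [Xg i] =\<^sub>G P @ [Xg i, Xg k, Xg i, Xg k] @ [Yg k, Xg k]"
      using weq_append_context[OF y'x'x_rewrite_at[of i], of P "[]"] True Suc.prems \<open>Xg k \<in> S\<close> \<open>Yg k \<in> S\<close>
      by (auto simp: block_def)
    also have "\<dots> \<equiv>\<^sub>H P @ [Yg k, Xg k]"
    proof -
      have "P @ [Xg i, Xg k, Xg i, Xg k] \<equiv>\<^sub>H P"
        by (rule same_rcoset_absorb_word[OF IH]) (use True Suc.prems \<open>Xg k \<in> S\<close> in auto)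
      from same_rcoset_append[OF this] show ?thesis by simp
    qed
    finally show ?thesis using rep True by (simp add: block_def weq_imp_same_rcoset)
  next
    case False
    then have "\<forall>t\<in>set (block e k). commuting (Xg i) t"
      using Suc.prems \<open>Xg k \<in> S\<close> \<open>Yg k \<in> S\<close> commuting_Xg_Yg
      by (auto simp: block_def intro!: commuting_far)
    then have "P @ block e k @ [Xg i] =\<^sub>G P @ [Xg i] @ block e k"
      using weq_append_context[OF weq_sym[OF weq_commuting_words[of "[Xg i]" "block e k"]], of P "[]"]
      by simp
    also have "\<dots> \<equiv>\<^sub>H P @ block e k"
      using same_rcoset_append[OF IH[of "[Xg i]", simplified]] Suc.prems by auto
    finally show ?thesis using rep by simp
  qed
qed

lemma coset_rep_split:
  "k \<le> j \<Longrightarrow> Suc j \<le> n \<Longrightarrow>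
    coset_rep e k = blocks e (Suc (Suc j)) (Suc n) @ block e (Suc j) @ block e j @ blocks e k j"
  using blocks_split[of k j "Suc n" e] blocks_Suc[of j "Suc n" e] blocks_Suc[of "Suc j" "Suc n" e] by simp

lemma coset_rep_append_split:
  assumes "K \<le> k" "k \<le> j" "Suc j \<le> n" "z \<in> S" "gen_index z = Suc j"
  shows "coset_rep e k @ [z] =\<^sub>G
    blocks e (Suc (Suc j)) (Suc n) @ block e (Suc j) @ block e j @ [z] @ blocks e k j"
  using coset_rep_split[of k j e] assms
    weq_append_context[OF weq_blocks_commute[of "[z]" k j e], of "blocks e (Suc (Suc j)) (Suc n) @ block e (Suc j) @ block e j" "[]"]
  by simp

lemma block_append_Xg: "Xg j \<in> S \<Longrightarrow> block e j @ [Xg j] =\<^sub>G block (e(j := \<not> e j)) j"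
  using weq_delete_relator[OF square_relator, of "Xg j" "[Yg j]" "[]"] by (simp add: block_def)

lemma Xg_toggles_own:
  assumes "K \<le> k" "k \<le> n"
  shows "coset_rep e k @ [Xg k] =\<^sub>G coset_rep (e(k := \<not> e k)) k"
proof -
  define P where "P = coset_rep e (Suc k)"
  have "coset_rep e k @ [Xg k] = P @ block e k @ [Xg k]" using assms blocks_Suc P_def by simp
  also have "\<dots> =\<^sub>G P @ block (e(k := \<not> e k)) k"
    using weq_append_context[OF block_append_Xg[of k e], of P "[]"] Xg_upper assms by simp
  also have "\<dots> = coset_rep (e(k := \<not> e k)) k" using assms blocks_Suc blocks_update P_def by simp
  finally show ?thesis .
qed

lemma Xg_toggles_next:
  assumes "K \<le> k" "k \<le> j" "Suc j \<le> n" "\<not> e j"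
  shows "coset_rep e k @ [Xg (Suc j)] =\<^sub>G coset_rep (e(Suc j := \<not> e (Suc j))) k"
proof -
  define P Q e' where "P = blocks e (Suc (Suc j)) (Suc n)" and "Q = blocks e k j"
    and "e' = e(Suc j := \<not> e (Suc j))"
  have S: "Xg (Suc j) \<in> S" "Yg j \<in> S" using Xg_upper Yg_upper assms by auto
  have "coset_rep e k @ [Xg (Suc j)] =\<^sub>G P @ block e (Suc j) @ [Yg j, Xg (Suc j)] @ Q"
    using coset_rep_append_split[of k j "Xg (Suc j)" e] assms S P_def Q_def by (simp add: block_def)
  also have "\<dots> =\<^sub>G P @ block e (Suc j) @ [Xg (Suc j), Yg j] @ Q"
    using weq_commuting_swap[of "Yg j" "Xg (Suc j)" "P @ block e (Suc j)" Q] commuting_Xg_Yg[of "Suc j" j] S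
    by simp
  also have "\<dots> =\<^sub>G P @ block e' (Suc j) @ [Yg j] @ Q"
    using weq_append_context[OF block_append_Xg[of "Suc j" e], of P "[Yg j] @ Q"] S e'_def by simp
  also have "\<dots> = coset_rep e' k"
    using coset_rep_split[of k j e'] assms blocks_update P_def Q_def e'_def by (simp add: block_def)
  finally show ?thesis unfolding e'_def .
qed

lemma Xg_absorbed_next:
  assumes "K \<le> k" "k \<le> j" "Suc j \<le> n" "e j"
  shows "coset_rep e k @ [Xg (Suc j)] \<equiv>\<^sub>H coset_rep e k"
proof -
  define P Q where "P = blocks e (Suc (Suc j)) (Suc n)" and "Q = blocks e k j"
  have S: "Xg j \<in> S" "Yg j \<in> S" "Xg (Suc j) \<in> S" "Yg (Suc j) \<in> S"
    using Xg_upper Yg_upper assms by auto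
  interpret adjacent_letters S "relators_on n S" "Xg j" "Yg j" "Xg (Suc j)" "Yg (Suc j)"
    using adjacent_letters_at S by blast
  have pair: "block e (Suc j) @ [Yg j, Xg j, Xg (Suc j)] =\<^sub>G
      [Xg (Suc j), Xg j, Xg (Suc j)] @ block e (Suc j) @ [Yg j, Xg j]"
    using y'yxx'_rewrite y'x'yxx'_rewrite by (simp add: block_def)
  have "coset_rep e k @ [Xg (Suc j)] =\<^sub>G P @ (block e (Suc j) @ [Yg j, Xg j, Xg (Suc j)]) @ Q"
    using coset_rep_append_split[of k j "Xg (Suc j)" e] assms S P_def Q_def by (simp add: block_def)
  also have "\<dots> =\<^sub>G P @ ([Xg (Suc j), Xg j, Xg (Suc j)] @ block e (Suc j) @ [Yg j, Xg j]) @ Q"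
    by (rule weq_append_context[OF pair])
  also have "\<dots> \<equiv>\<^sub>H P @ block e (Suc j) @ block e j @ Q"
  proof -
    have "P @ [Xg (Suc j), Xg j, Xg (Suc j)] \<equiv>\<^sub>H P"
      using same_rcoset_absorb_word[of "[Xg (Suc j), Xg j, Xg (Suc j)]"] Xg_absorbed[of "Suc (Suc j)"] assms S P_def
      by simp
    from same_rcoset_append[OF this, of "block e (Suc j) @ [Yg j, Xg j] @ Q"] show ?thesis
      using assms by (simp add: block_def)
  qed
  also have "\<dots> = coset_rep e k" using coset_rep_split assms P_def Q_def by simp
  finally show ?thesis .
qed

lemma Yg_absorbed_far:
  assumes "Yg i \<in> S" "K \<le> k" "k \<le> Suc n" "i + 2 \<le> k"
  shows "coset_rep e k @ [Yg i] \<equiv>\<^sub>H coset_rep e k"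
proof -
  have "coset_rep e k @ [Yg i] =\<^sub>G [Yg i] @ coset_rep e k"
    using weq_blocks_commute[of "[Yg i]" k "Suc n"] assms by simp
  also have "\<dots> \<equiv>\<^sub>H coset_rep e k" using assms by (intro same_rcoset_prefix) auto
  finally show ?thesis .
qed

lemma Yg_extends: "i \<le> n \<Longrightarrow> coset_rep e (Suc i) @ [Yg i] = coset_rep (e(i := False)) i"
  using blocks_Suc[of i "Suc n" "e(i := False)"] blocks_update[of i "Suc i" "Suc n"] by (simp add: block_def)

lemma Yg_cancels_own:
  assumes "K \<le> k" "k \<le> n" "\<not> e k"
  shows "coset_rep e k @ [Yg k] =\<^sub>G coset_rep e (Suc k)"
  using weq_delete_relator[OF square_relator[OF Yg_upper], of k "coset_rep e (Suc k)" "[]"]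
    blocks_Suc[of k "Suc n" e] assms by (simp add: block_def)

lemma Yg_absorbed_own:
  assumes "K \<le> k" "k \<le> n" "e k"
  shows "coset_rep e k @ [Yg k] \<equiv>\<^sub>H coset_rep e k"
proof -
  define P where "P = coset_rep e (Suc k)"
  have S: "Xg k \<in> S" "Yg k \<in> S" using Xg_upper Yg_upper assms by auto
  have "coset_rep e k @ [Yg k] = P @ [Yg k, Xg k, Yg k] @ []"
    using blocks_Suc[of k "Suc n" e] assms P_def by (simp add: block_def)
  also have "\<dots> =\<^sub>G (P @ [Xg k]) @ [Yg k, Xg k]"
    using weq_append_context[OF yxy_rewrite_at[OF S]] by simp
  also have "\<dots> \<equiv>\<^sub>H P @ [Yg k, Xg k]"
    using same_rcoset_append[OF Xg_absorbed[of "Suc k" k e]] assms S P_def by simp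
  also have "\<dots> = coset_rep e k" using blocks_Suc[of k "Suc n" e] assms P_def by (simp add: block_def)
  finally show ?thesis .
qed

lemma Yg_toggles_prev:
  assumes "K \<le> k" "k \<le> j" "Suc j \<le> n" "\<not> e (Suc j)"
  shows "coset_rep e k @ [Yg (Suc j)] \<equiv>\<^sub>H coset_rep (e(j := \<not> e j)) k"
proof -
  define P Q e' where "P = blocks e (Suc (Suc j)) (Suc n)" and "Q = blocks e k j"
    and "e' = e(j := \<not> e j)"
  have S: "Xg j \<in> S" "Yg j \<in> S" "Xg (Suc j) \<in> S" "Yg (Suc j) \<in> S"
    using Xg_upper Yg_upper assms by auto
  interpret adjacent_letters S "relators_on n S" "Xg j" "Yg j" "Xg (Suc j)" "Yg (Suc j)"
    using adjacent_letters_at S by blast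
  have pair: "[Yg (Suc j)] @ block e j @ [Yg (Suc j)] =\<^sub>G [Xg j, Yg j, Xg j] @ [Yg (Suc j)] @ block e' j"
    using y'yy'_rewrite y'yxy'_rewrite by (simp add: block_def e'_def)
  have "coset_rep e k @ [Yg (Suc j)] =\<^sub>G P @ ([Yg (Suc j)] @ block e j @ [Yg (Suc j)]) @ Q"
    using coset_rep_append_split[of k j "Yg (Suc j)" e] assms S P_def Q_def by (simp add: block_def)
  also have "\<dots> =\<^sub>G (P @ [Xg j, Yg j, Xg j]) @ [Yg (Suc j)] @ block e' j @ Q"
    using weq_append_context[OF pair] by simp
  also have "\<dots> =\<^sub>G ([Xg j, Yg j, Xg j] @ P) @ [Yg (Suc j)] @ block e' j @ Q"
    using weq_append[OF weq_blocks_commute[of "[Xg j, Yg j, Xg j]"] weq_refl] assms S P_def by simp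
  also have "\<dots> \<equiv>\<^sub>H P @ [Yg (Suc j)] @ block e' j @ Q"
    using same_rcoset_prefix[of "[Xg j, Yg j, Xg j]" "S - {Yg n}" "P @ [Yg (Suc j)] @ block e' j @ Q"] S assms
    by simp
  also have "\<dots> = coset_rep e' k"
    using coset_rep_split[of k j e'] assms blocks_update P_def Q_def e'_def by (simp add: block_def)
  finally show ?thesis unfolding e'_def .
qed

lemma Yg_absorbed_next:
  assumes "K \<le> k" "k \<le> j" "Suc j \<le> n" "e (Suc j)"
  shows "coset_rep e k @ [Yg (Suc j)] \<equiv>\<^sub>H coset_rep e k"
proof -
  define P Q where "P = blocks e (Suc (Suc j)) (Suc n)" and "Q = blocks e k j"
  have S: "Xg j \<in> S" "Yg j \<in> S" "Xg (Suc j) \<in> S" "Yg (Suc j) \<in> S"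
    using Xg_upper Yg_upper assms by auto
  interpret adjacent_letters S "relators_on n S" "Xg j" "Yg j" "Xg (Suc j)" "Yg (Suc j)"
    using adjacent_letters_at S by blast
  have pair: "[Yg (Suc j), Xg (Suc j)] @ block e j @ [Yg (Suc j)] =\<^sub>G
      [Yg j, Xg (Suc j)] @ [Yg (Suc j), Xg (Suc j)] @ block e j"
    using y'x'yy'_rewrite y'x'yxy'_rewrite by (simp add: block_def)
  have "coset_rep e k @ [Yg (Suc j)] =\<^sub>G P @ ([Yg (Suc j), Xg (Suc j)] @ block e j @ [Yg (Suc j)]) @ Q"
    using coset_rep_append_split[of k j "Yg (Suc j)" e] assms S P_def Q_def by (simp add: block_def)
  also have "\<dots> =\<^sub>G (P @ [Yg j]) @ [Xg (Suc j)] @ [Yg (Suc j), Xg (Suc j)] @ block e j @ Q"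
    using weq_append_context[OF pair] by simp
  also have "\<dots> =\<^sub>G ([Yg j] @ P) @ [Xg (Suc j)] @ [Yg (Suc j), Xg (Suc j)] @ block e j @ Q"
    using weq_append[OF weq_blocks_commute[of "[Yg j]"] weq_refl] assms S P_def by simp
  also have "\<dots> \<equiv>\<^sub>H (P @ [Xg (Suc j)]) @ [Yg (Suc j), Xg (Suc j)] @ block e j @ Q"
    using same_rcoset_prefix[of "[Yg j]" "S - {Yg n}" "P @ [Xg (Suc j), Yg (Suc j), Xg (Suc j)] @ block e j @ Q"] S assms
    by simp
  also have "\<dots> \<equiv>\<^sub>H P @ [Yg (Suc j), Xg (Suc j)] @ block e j @ Q"
    using same_rcoset_append[OF Xg_absorbed[of "Suc (Suc j)" "Suc j" e]] assms S P_def by simp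
  also have "\<dots> = coset_rep e k"
    using coset_rep_split[of k j e] assms P_def Q_def by (simp add: block_def)
  finally show ?thesis .
qed

definition has_coset_rep :: "gen list \<Rightarrow> bool" where
  "has_coset_rep w \<longleftrightarrow> (\<exists>e k. K \<le> k \<and> k \<le> Suc n \<and> w \<equiv>\<^sub>H coset_rep e k)"

lemma has_coset_repI: "w \<equiv>\<^sub>H coset_rep e k \<Longrightarrow> K \<le> k \<Longrightarrow> k \<le> Suc n \<Longrightarrow> has_coset_rep w"
  unfolding has_coset_rep_def by blast

lemma has_coset_rep_append_Xg:
  assumes "K \<le> k" "k \<le> Suc n" "Xg i \<in> S"
  shows "has_coset_rep (coset_rep e k @ [Xg i])"
proof -
  have "i \<le> n" using index_bounds[OF assms(3)] by simp
  consider "i < k" | "i = k" | j where "i = Suc j" "k \<le> j" "e j" | j where "i = Suc j" "k \<le> j" "\<not> e j"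
    by (cases i) fastforce+
  then show ?thesis
  proof cases
    case 1
    then show ?thesis using assms by (intro has_coset_repI[OF Xg_absorbed])
  next
    case 2
    then show ?thesis
      using assms \<open>i \<le> n\<close> by (auto intro: has_coset_repI[OF weq_imp_same_rcoset[OF Xg_toggles_own]])
  next
    case 3
    then show ?thesis using assms \<open>i \<le> n\<close> by (auto intro: has_coset_repI[OF Xg_absorbed_next])
  next
    case 4
    then show ?thesis
      using assms \<open>i \<le> n\<close> by (auto intro: has_coset_repI[OF weq_imp_same_rcoset[OF Xg_toggles_next]])
  qed
qed

lemma has_coset_rep_append_Yg:
  assumes "K \<le> k" "k \<le> Suc n" "Yg i \<in> S"
  shows "has_coset_rep (coset_rep e k @ [Yg i])"
proof -
  have "i \<le> n" using index_bounds[OF assms(3)] by simp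
  consider "i + 2 \<le> k" | "Suc i = k" | "i = k" "e k" | "i = k" "\<not> e k"
    | j where "i = Suc j" "k \<le> j" "e (Suc j)" | j where "i = Suc j" "k \<le> j" "\<not> e (Suc j)"
    by (cases i) fastforce+
  then show ?thesis
  proof cases
    case 1
    then show ?thesis using assms by (intro has_coset_repI[OF Yg_absorbed_far])
  next
    case 2
    \<comment> \<open>\<open>y\<^sub>K\<^sub>-\<^sub>1 \<notin> S\<close> guarantees that the new block \<open>y\<^sub>i\<close> has index at least \<open>K\<close>.\<close>
    have "K \<le> i"
    proof (rule ccontr)
      assume "\<not> K \<le> i"
      with 2 assms have "i = K - 1" by simp
      with Yg_gap assms(3) show False by simp
    qed
    with 2 show ?thesis
      using Yg_extends[of i e] \<open>i \<le> n\<close>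
      by (intro has_coset_repI[OF weq_imp_same_rcoset, where e = "e(i := False)" and k = i]) simp_all
  next
    case 3
    then show ?thesis using assms \<open>i \<le> n\<close> by (auto intro: has_coset_repI[OF Yg_absorbed_own])
  next
    case 4
    then show ?thesis
      using assms \<open>i \<le> n\<close> by (auto intro: has_coset_repI[OF weq_imp_same_rcoset[OF Yg_cancels_own]])
  next
    case 5
    then show ?thesis using assms \<open>i \<le> n\<close> by (auto intro: has_coset_repI[OF Yg_absorbed_next])
  next
    case 6
    then show ?thesis using assms \<open>i \<le> n\<close> by (auto intro: has_coset_repI[OF Yg_toggles_prev])
  qed
qed

lemma has_coset_rep_word: "set w \<subseteq> S \<Longrightarrow> has_coset_rep w"
proof (induction w rule: rev_induct)
  case Nil
  show ?case using K_le by (intro has_coset_repI[of _ "\<lambda>_. False" "Suc n"]) (simp_all add: weq_imp_same_rcoset)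
next
  case (snoc z w)
  then obtain e k where k: "K \<le> k" "k \<le> Suc n" and w: "w \<equiv>\<^sub>H coset_rep e k"
    by (auto simp: has_coset_rep_def)
  have "has_coset_rep (coset_rep e k @ [z])"
    using has_coset_rep_append_Xg[OF k] has_coset_rep_append_Yg[OF k] snoc.prems by (cases z) auto
  then obtain e' k' where "K \<le> k'" "k' \<le> Suc n" and z: "coset_rep e k @ [z] \<equiv>\<^sub>H coset_rep e' k'"
    by (auto simp: has_coset_rep_def)
  then show ?case using same_rcoset_trans[OF same_rcoset_append[OF w] z] by (intro has_coset_repI)
qed

theorem rcosets_presented_A2:
  defines "G \<equiv> presented_group S (relators_on n S)"
    and "H \<equiv> generate (presented_group S (relators_on n S)) ((\<lambda>z. word_elt (relators_on n S) [z]) ` (S - {Yg n}))"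
  shows "rcosets\<^bsub>G\<^esub> H =
    {H} \<union> {H #>\<^bsub>G\<^esub> word_elt (relators_on n S) (coset_word n k eps) | k eps. K \<le> k \<and> k \<le> n}"
    (is "_ = ?R")
proof -
  have T: "S - {Yg n} \<subseteq> S" by blast
  have H_rep: "H #>\<^bsub>G\<^esub> word_elt (relators_on n S) w = H #>\<^bsub>G\<^esub> word_elt (relators_on n S) (coset_rep e k)"
    if "w \<equiv>\<^sub>H coset_rep e k" for w e k
    using rcoset_eq_if_same_rcoset[OF T that] unfolding G_def H_def .
  have H_one: "H #>\<^bsub>G\<^esub> word_elt (relators_on n S) [] = H"
    using rcoset_word_elt[OF T, of "[]"] generate_letters[OF T] unfolding G_def H_def by simp
  show ?thesis
  proof (intro equalityI subsetI)
    fix C assume "C \<in> rcosets\<^bsub>G\<^esub> H"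
    then obtain w where C: "C = H #>\<^bsub>G\<^esub> word_elt (relators_on n S) w" and w: "set w \<subseteq> S"
      unfolding RCOSETS_def G_def carrier_presented_group by auto
    obtain e k where k: "K \<le> k" "k \<le> Suc n" and "w \<equiv>\<^sub>H coset_rep e k"
      using has_coset_rep_word[OF w] by (auto simp: has_coset_rep_def)
    then have "C = H #>\<^bsub>G\<^esub> word_elt (relators_on n S) (coset_rep e k)" using C H_rep by simp
    then show "C \<in> ?R"
      using k H_one by (cases "k = Suc n") (auto simp: coset_word_eq_blocks)
  next
    fix C assume "C \<in> ?R"
    then consider "C = H"
      | k eps where "C = H #>\<^bsub>G\<^esub> word_elt (relators_on n S) (coset_word n k eps)" "K \<le> k" "k \<le> n"
      by blast
    moreover have "H #>\<^bsub>G\<^esub> word_elt (relators_on n S) w \<in> rcosets\<^bsub>G\<^esub> H" if "set w \<subseteq> S" for w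
      using that unfolding RCOSETS_def G_def carrier_presented_group by auto
    ultimately show "C \<in> rcosets\<^bsub>G\<^esub> H"
      using H_one blocks_letters by cases (metis empty_subsetI set_empty, simp add: coset_word_eq_blocks)
  qed
qed

end

section \<open>Decompositions\<close>

lemma stopover_snoc: "stopover (xs @ [c]) = (\<lambda>i. sum_list (take i xs)) ` {1..length xs}"
proof -
  have "stopover (xs @ [c]) = (\<lambda>i. sum_list (take i (xs @ [c]))) ` {1..length xs}"
    unfolding stopover_def setcompr_eq_image by (simp add: atLeastAtMost_def atLeast_def atMost_def Collect_conj_eq)
  also have "\<dots> = (\<lambda>i. sum_list (take i xs)) ` {1..length xs}" by (intro image_cong) simp_all
  finally show ?thesis .
qed

lemma sum_list_butlast_last: "xs \<noteq> [] \<Longrightarrow> sum_list (butlast xs) + last xs = sum_list xs"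
  by (metis append_butlast_last_id sum_list_append sum_list_simps add_0_right)

lemma sum_list_take_le: "sum_list (take i xs) \<le> sum_list (xs :: nat list)"
  by (metis append_take_drop_id le_add1 sum_list_append)

lemma stopover_le:
  assumes "xs \<noteq> []" "x \<in> stopover xs"
  shows "x + last xs \<le> sum_list (xs :: nat list)"
proof -
  from assms obtain i where "x = sum_list (take i (butlast xs))"
    using stopover_snoc[of "butlast xs" "last xs"] by auto
  then show ?thesis using sum_list_take_le[of i "butlast xs"] sum_list_butlast_last[OF assms(1)] by simp
qed

lemma sum_butlast_mem_stopover:
  assumes "butlast xs \<noteq> []"
  shows "sum_list (butlast xs) \<in> stopover xs"
proof -
  have "xs = butlast xs @ [last xs]" using assms by (cases xs) auto
  then have "stopover xs = (\<lambda>i. sum_list (take i (butlast xs))) ` {1..length (butlast xs)}"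
    by (metis stopover_snoc)
  moreover have "Suc 0 < length xs" using assms by (cases xs) auto
  ultimately show ?thesis by (auto simp: Suc_le_eq intro!: image_eqI[of _ _ "length (butlast xs)"])
qed

lemma stopover_split_last: "stopover (xs @ [a, b]) = insert (sum_list xs + a) (stopover (xs @ [c]))"
proof -
  have "stopover (xs @ [a, b]) = (\<lambda>i. sum_list (take i (xs @ [a]))) ` insert (Suc (length xs)) {1..length xs}"
    using stopover_snoc[of "xs @ [a]" b] by (simp add: atLeastAtMostSuc_conv)
  also have "\<dots> = insert (sum_list xs + a) ((\<lambda>i. sum_list (take i xs)) ` {1..length xs})"
    by auto
  finally show ?thesis by (simp add: stopover_snoc)
qed

lemma S_set_split_last:
  assumes "decomposition mu (n + 1)" "mu \<noteq> []" "0 < last mu"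
  shows "S_set n lam (butlast mu @ [last mu - 1, 1]) = S_set n lam mu - {Yg n}"
proof -
  have "stopover (butlast mu @ [last mu - 1, 1]) = insert n (stopover mu)"
    using stopover_split_last[of "butlast mu" "last mu - 1" 1 "last mu"] sum_list_butlast_last[of mu] assms
    by (simp add: decomposition_def)
  then show ?thesis by (auto simp: S_set_def)
qed

lemma A2_coset_enumeration_S_set:
  assumes lam: "decomposition lam (n + 1)" "lam \<noteq> []"
    and mu: "decomposition mu (n + 1)" "mu \<noteq> []"
    and "1 < last mu" "last mu \<le> last lam"
  shows "A2_coset_enumeration n (S_set n lam mu) (n + 2 - last mu)"
proof
  have stopover_below: "x < n + 2 - last mu" if "x \<in> stopover mu \<or> x \<in> stopover lam" for x
    using that stopover_le[OF lam(2), of x] stopover_le[OF mu(2), of x] assms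
    by (auto simp: decomposition_def)
  have sum_butlast: "sum_list (butlast mu) + last mu = n + 1"
    using sum_list_butlast_last[OF mu(2)] mu by (simp add: decomposition_def)
  show "Xg i \<in> S_set n lam mu" if "n + 2 - last mu \<le> i" "i \<le> n" for i
    using that stopover_below sum_butlast by (fastforce simp: S_set_def)
  show "Yg i \<in> S_set n lam mu" if "n + 2 - last mu \<le> i" "i \<le> n" for i
    using that stopover_below sum_butlast by (fastforce simp: S_set_def)
  have "sum_list (butlast mu) = n + 1 - last mu" using sum_butlast by simp
  then show "Yg (n + 2 - last mu - 1) \<notin> S_set n lam mu"
    using sum_butlast_mem_stopover[of mu] by (cases "butlast mu = []") (auto simp: S_set_def)
qed (use assms in \<open>auto simp: S_set_def gens_def\<close>)

theorem proposition4:
  fixes n :: nat and lam mu :: "nat list"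
  assumes "n \<ge> 1"
    and "decomposition lam (n + 1)" and "decomposition mu (n + 1)"
    and "lam \<noteq> []" and "mu \<noteq> []"
    and "1 < last mu" and "last mu \<le> last lam"
  shows "let mu' = butlast mu @ [last mu - 1, 1];
             G = A2 n (S_set n lam mu);
             R = relators_on n (S_set n lam mu);
             H = generate G ((\<lambda>z. word_elt R [z]) ` S_set n lam mu')
         in rcosets\<^bsub>G\<^esub> H =
              {H} \<union> {H #>\<^bsub>G\<^esub> word_elt R (coset_word n k eps) | k eps.
                        n + 2 - last mu \<le> k \<and> k \<le> n}"
proof -
  interpret A2_coset_enumeration n "S_set n lam mu" "n + 2 - last mu"
    using assms(2-7) by (intro A2_coset_enumeration_S_set)
  show ?thesis
    using rcosets_presented_A2 S_set_split_last[of mu n lam] assms by (simp add: Let_def A2_def)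
qed

end
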